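(* In the backward-propagation task model described in the context, suppose the computing tasks are executed in the order $E_R^{(L)},\dots,E_1^{(L)},AT_R^{(L)},\dots,AT_1^{(L)},E_R^{(L-1)},\dots,AT_1^{(L-1)},\dots,AT_1^{(1)}$ and the A2A communication tasks in the order $C_R^{(L)},\dots,C_1^{(L)},D_R^{(L)},\dots,D_1^{(L)},C_R^{(L-1)},\dots,D_1^{(L-1)},\dots,D_1^{(1)}$, and that the all-reduce communication is performed with the chunk-based priority scheduling mechanism with chunk size $S_p$. If communicating an all-reduce tensor chunk incurs no startup overhead, then the time per iteration is minimized as $S_p\to 0$.
   Context: Backward-propagation task model for one training iteration of a distributed Mixture-of-Experts transformer with $L$ transformer blocks, each with an MHA layer plus gating function and an MoE layer, whose input is split into $R$ equal parts. For block $l$ and $1\le r\le R$: $AT_r^{(l)}$ (MHA+gating computing subtask), $E_r^{(l)}$ (expert computing subtask), $D_r^{(l)}$ (dispatch all-to-all (A2A) communication subtask), $C_r^{(l)}$ (combine A2A communication subtask), and an all-reduce communication of the gradient tensor of the MHA and gating parameters of block $l$. Tasks of the same type have equal durations. There is one computing resource and one communication resource; a computing and a communication task may run simultaneously, but not two of the same kind; tasks are non-preemptive. Dependencies: $C_r^{(l-1)}$ starts after $AT_r^{(l)}$ finishes ($1<l\le L$); $E_r^{(l)}$ after $C_r^{(l)}$; $D_r^{(l)}$ after $E_r^{(l)}$; $AT_r^{(l)}$ after $D_r^{(l)}$; the all-reduce of block $l$ can start only after all $AT_r^{(l)}$ ($1\le r\le R$) finish. Chunk-based priority scheduling: the all-reduce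 gradient tensor of each block is partitioned into chunks of size $S_p$, each communicated as a separate (non-preemptive) communication task with duration proportional to its size; all pending A2A tasks and all-reduce chunks are kept in a communication pool in which A2A tasks have strictly higher priority than all-reduce chunks, i.e. an all-reduce chunk is started on the communication resource only when no A2A task is ready to execute. *)

theory Defs
  imports Complex_Main
begin

text \<open>
Backward-propagation schedule of one training iteration of a distributed MoE model
with L blocks and R input parts.

Position k (0 \<le> k < 2RL) of the computing order belongs to block
L - k div (2R); within a block, position p = k mod (2R) is E_{R-p} for p < R and
AT_{2R-p} for p \<ge> R.  Position j of the A2A order is likewise C_{R-p} for p < R and
D_{2R-p} for p \<ge> R.  With this indexing the dependencies of the task model read:
computing task k depends exactly on A2A task k (E_r after C_r, AT_r after D_r, same block),
and A2A task j (j \<ge> R) depends exactly on computing task j - R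
(C_r^{(l-1)} after AT_r^{(l)}, D_r after E_r); A2A tasks j < R (the C_r^{(L)}) have no
predecessor.  The all-reduce of the block with block index i (i = 0 is block L) is
released when computing task 2R(i+1)-1 (i.e. AT_1 of that block) finishes.

All-reduce: each block's gradient tensor has size M and is communicated at time
beta per unit size (no startup overhead).  With chunk size S it is cut into
nat \<lceil>M/S\<rceil> chunks, each of size S except the last (the remainder).  Chunks are
queued FIFO (block by block in release order, within a block in order).
\<close>

definition a2a_dur :: "nat \<Rightarrow> real \<Rightarrow> real \<Rightarrow> nat \<Rightarrow> real" where
  "a2a_dur R tC tD j = (if j mod (2*R) < R then tC else tD)"

definition comp_dur :: "nat \<Rightarrow> real \<Rightarrow> real \<Rightarrow> nat \<Rightarrow> real" where
  "comp_dur R tE tAT k = (if k mod (2*R) < R then tE else tAT)"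

definition nchunks :: "real \<Rightarrow> real \<Rightarrow> nat" where
  "nchunks M S = nat \<lceil>M / S\<rceil>"

text \<open>duration of the m-th chunk in the global FIFO chunk stream\<close>
definition chunk_dur :: "real \<Rightarrow> real \<Rightarrow> real \<Rightarrow> nat \<Rightarrow> real" where
  "chunk_dur beta M S m = beta * min S (M - real (m mod nchunks M S) * S)"

text \<open>
Priority gap filling on the communication resource before the next A2A task.
The resource is free at time t, chunks 0..<m have been sent, the next A2A task is
ready at time r.  An A2A task that is ready is always started; otherwise the next
pending released chunk (release time rel m, only if avail m) is started
(non-preemptively); otherwise the resource idles.  Returns the start time of the
A2A task and the new number of sent chunks.
\<close>
function fill :: "(nat \<Rightarrow> real) \<Rightarrow> (nat \<Rightarrow> bool) \<Rightarrow> (nat \<Rightarrow> real) \<Rightarrow> nat \<Rightarrow> real \<Rightarrow> nat \<Rightarrow> real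
    \<Rightarrow> real \<times> nat" where
  "fill rel avail dur tot t m r =
     (if tot \<le> m \<or> \<not> avail m then (max t r, m)
      else (let s = max t (rel m) in
            if r \<le> s then (max t r, m)
            else fill rel avail dur tot (s + dur m) (Suc m) r))"
  by pat_completeness auto
termination
  by (relation "measure (\<lambda>(rel, avail, dur, tot, t, m, r). tot - m)") auto

text \<open>After the last A2A task: send all remaining chunks greedily; returns finish time.\<close>
function drain :: "(nat \<Rightarrow> real) \<Rightarrow> (nat \<Rightarrow> real) \<Rightarrow> nat \<Rightarrow> real \<Rightarrow> nat \<Rightarrow> real" where
  "drain rel dur tot t m =
     (if tot \<le> m then t else drain rel dur tot (max t (rel m) + dur m) (Suc m))"
  by pat_completeness auto
termination
  by (relation "measure (\<lambda>(rel, dur, tot, t, m). tot - m)") auto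

text \<open>
hist ... j = list of (finish time of A2A task i, finish time of computing task i,
number of chunks sent before A2A task i started) for i < j.
\<close>
fun hist :: "nat \<Rightarrow> nat \<Rightarrow> real \<Rightarrow> real \<Rightarrow> real \<Rightarrow> real \<Rightarrow> real \<Rightarrow> real \<Rightarrow> real \<Rightarrow> nat
    \<Rightarrow> (real \<times> real \<times> nat) list" where
  "hist L R tAT tE tD tC beta M S 0 = []"
| "hist L R tAT tE tD tC beta M S (Suc j) =
     (let h = hist L R tAT tE tD tC beta M S j;
          n = nchunks M S;
          t0 = (if j = 0 then 0 else fst (h ! (j - 1)));
          m0 = (if j = 0 then 0 else snd (snd (h ! (j - 1))));
          cprev = (if j = 0 then 0 else fst (snd (h ! (j - 1))));
          r = (if j < R then 0 else fst (snd (h ! (j - R))));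
          rel = (\<lambda>m. fst (snd (h ! (2*R*(m div n + 1) - 1))));
          avail = (\<lambda>m. 2*R*(m div n + 1) - 1 < j);
          (s, m1) = fill rel avail (chunk_dur beta M S) (L * n) t0 m0 r;
          af = s + a2a_dur R tC tD j;
          cf = max cprev af + comp_dur R tE tAT j
      in h @ [(af, cf, m1)])"

definition iter_time :: "nat \<Rightarrow> nat \<Rightarrow> real \<Rightarrow> real \<Rightarrow> real \<Rightarrow> real \<Rightarrow> real \<Rightarrow> real \<Rightarrow> real \<Rightarrow> real" where
  "iter_time L R tAT tE tD tC beta M S =
     (let N = 2*R*L;
          h = hist L R tAT tE tD tC beta M S N;
          n = nchunks M S;
          rel = (\<lambda>m. fst (snd (h ! (2*R*(m div n + 1) - 1))));
          fin = drain rel (chunk_dur beta M S) (L * n) (fst (h ! (N - 1))) (snd (snd (h ! (N - 1))))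
      in max (fst (snd (h ! (N - 1)))) fin)"

end

theory Submission
  imports Defs
begin

(*
  Write T(S) for the time per iteration with chunk size S and N = 2RL for the number of A2A
  tasks.  The heart of the proof is T(S) \<le> T(S') + N \<beta> S for all chunk sizes S, S' > 0;
  it forces T(S) to converge to inf T as S \<rightarrow> 0.

  To prove the inequality, first compare the two schedules task by task: with chunk size S an
  A2A task starts at most one chunk (of duration at most \<beta> S) after it is ready and the
  communication resource is free, so along the task order every task finishes at most N \<beta> S
  later than with chunk size S'.  Then a busy-period argument: with chunk size S the
  communication resource idles only until the ready time of an A2A task or the release time of
  a chunk.  Everything left to communicate after such a point is released at most N \<beta> S
  earlier with chunk size S', and the all-reduce traffic of a block is \<beta> M whatever the chunk
  size, so with chunk size S' communicating it takes at least as long after that point.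
*)

section \<open>Gap filling and draining on one resource\<close>

declare fill.simps[simp del] drain.simps[simp del]

lemma fill_stop:
  assumes "tot \<le> m \<or> \<not> avail m \<or> r \<le> max t (rel m)"
  shows "fill rel avail dur tot t m r = (max t r, m)"
  using assms by (subst fill.simps) (auto simp: Let_def)

lemma fill_send_chunk:
  assumes "\<not> (tot \<le> m \<or> \<not> avail m \<or> r \<le> max t (rel m))"
  shows "fill rel avail dur tot t m r = fill rel avail dur tot (max t (rel m) + dur m) (Suc m) r"
  using assms by (subst fill.simps) (auto simp: Let_def)

lemma drain_stop: "tot \<le> m \<Longrightarrow> drain rel dur tot t m = t"
  by (subst drain.simps) simp

lemma drain_send_chunk:
  "m < tot \<Longrightarrow> drain rel dur tot t m = drain rel dur tot (max t (rel m) + dur m) (Suc m)"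
  by (subst drain.simps) simp

lemma fill_cong:
  assumes "\<And>m. avail m \<Longrightarrow> rel m = rel' m"
  shows "fill rel avail dur tot t m r = fill rel' avail dur tot t m r"
  using assms
proof (induction rel avail dur tot t m r rule: fill.induct)
  case (1 rel avail dur tot t m r)
  show ?case
    by (subst (1 2) fill.simps) (use 1 in \<open>simp add: Let_def\<close>)
qed

lemma drain_cong:
  assumes "\<And>m. m < tot \<Longrightarrow> rel m = rel' m"
  shows "drain rel dur tot t m = drain rel' dur tot t m"
  using assms
proof (induction rel dur tot t m rule: drain.induct)
  case (1 rel dur tot t m)
  show ?case
    by (subst (1 2) drain.simps) (use 1 in simp)
qed

lemma fill_start_ge: "max t r \<le> fst (fill rel avail dur tot t m r)"
proof (induction rel avail dur tot t m r rule: fill.induct)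
  case (1 rel avail dur tot t m r)
  then show ?case
    by (cases "tot \<le> m \<or> \<not> avail m \<or> r \<le> max t (rel m)") (auto simp: fill_stop fill_send_chunk)
qed

lemma fill_start_le:
  assumes "\<And>m. dur m \<le> D" and "0 \<le> D"
  shows "fst (fill rel avail dur tot t m r) \<le> max t (r + D)"
  using assms
proof (induction rel avail dur tot t m r rule: fill.induct)
  case (1 rel avail dur tot t m r)
  show ?case
  proof (cases "tot \<le> m \<or> \<not> avail m \<or> r \<le> max t (rel m)")
    case True
    then show ?thesis using 1(3) by (auto simp: fill_stop)
  next
    case False
    with 1 have "fst (fill rel avail dur tot t m r) \<le> max (max t (rel m) + dur m) (r + D)"
      by (simp add: fill_send_chunk)
    also have "\<dots> \<le> max t (r + D)"
    proof -
      have "max t (rel m) + dur m \<le> r + D" using False 1(2)[of m] by (auto simp: not_le)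
      then show ?thesis by simp
    qed
    finally show ?thesis .
  qed
qed

definition late_work :: "(nat \<Rightarrow> real) \<Rightarrow> (nat \<Rightarrow> real) \<Rightarrow> real \<Rightarrow> nat \<Rightarrow> nat \<Rightarrow> real" where
  "late_work rel dur T m n = (\<Sum>i\<in>{m..<n}. if T \<le> rel i then dur i else 0)"

lemma late_work_Suc:
  "m < n \<Longrightarrow> late_work rel dur T m n = (if T \<le> rel m then dur m else 0) + late_work rel dur T (Suc m) n"
  unfolding late_work_def by (simp add: sum.atLeast_Suc_lessThan)

lemma late_work_empty: "n \<le> m \<Longrightarrow> late_work rel dur T m n = 0"
  unfolding late_work_def by simp

lemma max_plus_late_le:
  fixes t a d T :: real
  assumes "0 \<le> d"
  shows "max t T + (if T \<le> a then d else 0) \<le> max (max t a + d) T"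
  using assms by auto

text \<open>
  All work released at or after \<open>T\<close> is done after \<open>T\<close>; here \<open>r\<close> and \<open>d\<close> are the ready time
  and the duration of the A2A task that the gap filling precedes.
\<close>

lemma fill_late_work:
  assumes "\<And>m. 0 \<le> dur m" and "0 \<le> d"
  shows "max t T + (if T \<le> r then d else 0) + late_work rel dur T m tot
     \<le> max (fst (fill rel avail dur tot t m r) + d) T
        + late_work rel dur T (snd (fill rel avail dur tot t m r)) tot"
  using assms
proof (induction rel avail dur tot t m r rule: fill.induct)
  case (1 rel avail dur tot t m r)
  show ?case
  proof (cases "tot \<le> m \<or> \<not> avail m \<or> r \<le> max t (rel m)")
    case True
    then show ?thesis using max_plus_late_le[OF 1(3), of t T r] by (simp add: fill_stop)
  next
    case False
    then have "max (max t (rel m) + dur m) T + (if T \<le> r then d else 0) + late_work rel dur T (Suc m) tot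
        \<le> max (fst (fill rel avail dur tot t m r) + d) T
          + late_work rel dur T (snd (fill rel avail dur tot t m r)) tot"
      using 1 by (simp add: fill_send_chunk)
    moreover have "max t T + (if T \<le> rel m then dur m else 0) \<le> max (max t (rel m) + dur m) T"
      using max_plus_late_le[OF 1(2)] .
    moreover have "late_work rel dur T m tot = (if T \<le> rel m then dur m else 0) + late_work rel dur T (Suc m) tot"
      using False by (simp add: late_work_Suc)
    ultimately show ?thesis by linarith
  qed
qed

lemma drain_late_work:
  assumes "\<And>m. 0 \<le> dur m"
  shows "max t T + late_work rel dur T m tot \<le> max (drain rel dur tot t m) T"
  using assms
proof (induction rel dur tot t m rule: drain.induct)
  case (1 rel dur tot t m)
  show ?case
  proof (cases "tot \<le> m")
    case True
    then show ?thesis by (simp add: drain_stop late_work_empty)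
  next
    case False
    then have "max (max t (rel m) + dur m) T + late_work rel dur T (Suc m) tot \<le> max (drain rel dur tot t m) T"
      using 1 by (simp add: drain_send_chunk)
    moreover have "max t T + (if T \<le> rel m then dur m else 0) \<le> max (max t (rel m) + dur m) T"
      using max_plus_late_le[OF 1(2)] .
    moreover have "late_work rel dur T m tot = (if T \<le> rel m then dur m else 0) + late_work rel dur T (Suc m) tot"
      using False by (simp add: late_work_Suc)
    ultimately show ?thesis by linarith
  qed
qed

text \<open>
  The resource idles only until the ready time \<open>r\<close> of the A2A task or the release time of a
  chunk, so it suffices to bound the remaining work (plus \<open>X\<close>) from each such restart point.
\<close>

lemma fill_remaining_work_le:
  assumes "fill rel avail dur tot t m r = (s, m')"
    and "t + X + (\<Sum>i\<in>{m..<tot}. dur i) \<le> B"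
    and "\<And>k. m \<le> k \<Longrightarrow> k < tot \<Longrightarrow> avail k \<Longrightarrow> rel k < r \<Longrightarrow> rel k + X + (\<Sum>i\<in>{k..<tot}. dur i) \<le> B"
    and "\<And>k. m \<le> k \<Longrightarrow> tot \<le> k \<or> \<not> avail k \<or> r \<le> rel k \<Longrightarrow> r + X + (\<Sum>i\<in>{k..<tot}. dur i) \<le> B"
  shows "s + X + (\<Sum>i\<in>{m'..<tot}. dur i) \<le> B"
  using assms
proof (induction rel avail dur tot t m r arbitrary: s m' rule: fill.induct)
  case (1 rel avail dur tot t m r)
  show ?case
  proof (cases "tot \<le> m \<or> \<not> avail m \<or> r \<le> max t (rel m)")
    case True
    then have "s = max t r" "m' = m" using 1(2) by (simp_all add: fill_stop)
    moreover have "tot \<le> m \<or> \<not> avail m \<or> r \<le> rel m" if "t < r" using True that by auto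
    ultimately show ?thesis using 1(3) 1(5)[of m] by (cases "t < r") auto
  next
    case False
    have split: "(\<Sum>i\<in>{m..<tot}. dur i) = dur m + (\<Sum>i\<in>{Suc m..<tot}. dur i)"
      using False by (simp add: sum.atLeast_Suc_lessThan)
    have "max t (rel m) + dur m + X + (\<Sum>i\<in>{Suc m..<tot}. dur i) \<le> B"
      using 1(3) 1(4)[of m] False split by (cases "t < rel m") auto
    then show ?thesis
      using 1(1)[of "max t (rel m)" s m'] False 1(2,4,5) by (simp add: fill_send_chunk)
  qed
qed

lemma drain_le:
  assumes "t + (\<Sum>i\<in>{m..<tot}. dur i) \<le> B"
    and "\<And>k. m \<le> k \<Longrightarrow> k < tot \<Longrightarrow> rel k + (\<Sum>i\<in>{k..<tot}. dur i) \<le> B"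
  shows "drain rel dur tot t m \<le> B"
  using assms
proof (induction rel dur tot t m rule: drain.induct)
  case (1 rel dur tot t m)
  show ?case
  proof (cases "tot \<le> m")
    case True
    then show ?thesis using 1(2) by (simp add: drain_stop)
  next
    case False
    have split: "(\<Sum>i\<in>{m..<tot}. dur i) = dur m + (\<Sum>i\<in>{Suc m..<tot}. dur i)"
      using False by (simp add: sum.atLeast_Suc_lessThan)
    have "max t (rel m) + dur m + (\<Sum>i\<in>{Suc m..<tot}. dur i) \<le> B"
      using 1(2) 1(3)[of m] False split by (cases "t < rel m") auto
    then show ?thesis
      using 1(1) 1(3) False by (simp add: drain_send_chunk)
  qed
qed

section \<open>Chunks\<close>

lemma nchunks_pos: "0 < M \<Longrightarrow> 0 < S \<Longrightarrow> 0 < nchunks M S"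
  unfolding nchunks_def by simp

lemma nchunks_bounds:
  assumes "0 < M" and "0 < S"
  shows "real (nchunks M S - 1) * S < M" and "M \<le> real (nchunks M S) * S"
proof -
  have n: "real (nchunks M S) = of_int \<lceil>M / S\<rceil>"
    unfolding nchunks_def using assms by simp
  have "real (nchunks M S) < M / S + 1" "M / S \<le> real (nchunks M S)"
    unfolding n by linarith+
  then have "real (nchunks M S) * S < M + S" "M \<le> real (nchunks M S) * S"
    using assms(2) by (simp_all add: pos_less_divide_eq pos_divide_le_eq field_simps)
  then show "real (nchunks M S - 1) * S < M" and "M \<le> real (nchunks M S) * S"
    using nchunks_pos[OF assms] by (simp_all add: of_nat_diff algebra_simps)
qed

lemma chunk_dur_le: "0 \<le> beta \<Longrightarrow> chunk_dur beta M S m \<le> beta * S"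
  unfolding chunk_dur_def by (simp add: mult_left_mono)

lemma chunk_dur_nonneg:
  assumes "0 \<le> beta" and "0 < M" and "0 < S"
  shows "0 \<le> chunk_dur beta M S m"
proof -
  have "m mod nchunks M S \<le> nchunks M S - 1"
    using nchunks_pos[OF assms(2,3)] by (simp add: less_Suc_eq_le[symmetric])
  then have "real (m mod nchunks M S) * S \<le> real (nchunks M S - 1) * S"
    using assms(3) by (intro mult_right_mono) auto
  then have "0 \<le> M - real (m mod nchunks M S) * S"
    using nchunks_bounds(1)[OF assms(2,3)] by linarith
  then show ?thesis
    using assms unfolding chunk_dur_def by simp
qed

lemma chunk_dur_mod: "chunk_dur beta M S (m mod nchunks M S) = chunk_dur beta M S m"
  unfolding chunk_dur_def by simp

text \<open>All chunks but the last have full size \<open>S\<close>, the last one the remainder.\<close>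

lemma sum_chunk_dur:
  assumes "0 < M" and "0 < S"
  shows "(\<Sum>i<nchunks M S. chunk_dur beta M S i) = beta * M"
proof -
  define n where "n = nchunks M S"
  have n: "0 < n" "real (n - 1) * S < M" "M \<le> real n * S"
    using nchunks_pos nchunks_bounds assms unfolding n_def by auto
  have full: "min S (M - real i * S) = S" if "i < n - 1" for i
  proof -
    have "real (Suc i) * S \<le> real (n - 1) * S"
      using that assms(2) by (intro mult_right_mono) auto
    then show ?thesis using n(2) by (simp add: algebra_simps)
  qed
  have last: "min S (M - real (n - 1) * S) = M - real (n - 1) * S"
    using n by (simp add: of_nat_diff algebra_simps)
  have "{..<n} = insert (n - 1) {..<n - 1}" using n(1) by auto
  then have "(\<Sum>i<n. min S (M - real i * S)) = (M - real (n - 1) * S) + (\<Sum>i<n - 1. S)"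
    using full last by simp
  then have "(\<Sum>i<n. min S (M - real i * S)) = M" by simp
  then show ?thesis
    unfolding chunk_dur_def n_def[symmetric] by (simp add: sum_distrib_left[symmetric])
qed

lemma sum_blocks_periodic:
  fixes f :: "nat \<Rightarrow> 'a::comm_monoid_add"
  assumes "0 < n" and "\<And>m. f (m mod n) = f m"
  shows "(\<Sum>m<K * n. if P (m div n) then f m else 0) = (\<Sum>b<K. if P b then (\<Sum>i<n. f i) else 0)"
proof -
  let ?g = "\<lambda>m. if P (m div n) then f m else 0"
  have block: "(\<Sum>m\<in>{b * n..<b * n + n}. ?g m) = (if P b then (\<Sum>i<n. f i) else 0)" for b
  proof -
    have "(\<Sum>m\<in>{b * n..<b * n + n}. ?g m) = (\<Sum>m\<in>{0 + b * n..<n + b * n}. ?g m)"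
      by (simp add: add.commute)
    also have "\<dots> = (\<Sum>i\<in>{0..<n}. ?g (i + b * n))"
      by (rule sum.shift_bounds_nat_ivl)
    also have "\<dots> = (\<Sum>i<n. if P b then f i else 0)"
    proof (rule sum.cong)
      fix i assume "i \<in> {..<n}"
      then have "(i + b * n) div n = b" "(i + b * n) mod n = i" by auto
      then show "?g (i + b * n) = (if P b then f i else 0)"
        using assms(2)[of "i + b * n"] by simp
    qed (simp add: atLeast0LessThan)
    finally show ?thesis by (cases "P b") simp_all
  qed
  show ?thesis
    using sum.nat_group[of ?g n K] block by simp
qed

lemma sum_chunk_dur_blocks:
  assumes "0 < M" and "0 < S"
  shows "(\<Sum>m<K * nchunks M S. if P (m div nchunks M S) then chunk_dur beta M S m else 0)
       = (\<Sum>b<K. if P b then beta * M else 0)"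
proof -
  have "(\<Sum>m<K * nchunks M S. if P (m div nchunks M S) then chunk_dur beta M S m else 0)
      = (\<Sum>b<K. if P b then (\<Sum>i<nchunks M S. chunk_dur beta M S i) else 0)"
    by (rule sum_blocks_periodic[of _ "chunk_dur beta M S", OF nchunks_pos[OF assms] chunk_dur_mod])
  then show ?thesis by (simp only: sum_chunk_dur[OF assms])
qed

section \<open>The schedule as a recurrence\<close>

lemma hist_snoc:
  obtains x where "hist L R tAT tE tD tC beta M S (Suc j) = hist L R tAT tE tD tC beta M S j @ [x]"
  by (simp add: Let_def case_prod_beta)

declare hist.simps(2)[simp del]

lemma length_hist: "length (hist L R tAT tE tD tC beta M S j) = j"
proof (induction j)
  case (Suc j)
  obtain x where "hist L R tAT tE tD tC beta M S (Suc j) = hist L R tAT tE tD tC beta M S j @ [x]"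
    by (rule hist_snoc)
  with Suc show ?case by simp
qed simp

lemma nth_hist:
  "k < j \<Longrightarrow> hist L R tAT tE tD tC beta M S j ! k = hist L R tAT tE tD tC beta M S (Suc k) ! k"
proof (induction j)
  case (Suc j)
  obtain x where "hist L R tAT tE tD tC beta M S (Suc j) = hist L R tAT tE tD tC beta M S j @ [x]"
    by (rule hist_snoc)
  with Suc show ?case by (cases "k = j") (simp_all add: nth_append length_hist)
qed simp

locale backprop_schedule =
  fixes L R :: nat and tAT tE tD tC beta M :: real
  assumes L_pos: "1 \<le> L" and R_pos: "1 \<le> R"
    and tAT_pos: "0 < tAT" and tE_pos: "0 < tE" and tD_pos: "0 < tD" and tC_pos: "0 < tC"
    and beta_pos: "0 < beta" and M_pos: "0 < M"
begin

abbreviation "N \<equiv> 2 * R * L"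
abbreviation "a2a_time \<equiv> a2a_dur R tC tD"
abbreviation "comp_time \<equiv> comp_dur R tE tAT"
abbreviation "chunk_time \<equiv> chunk_dur beta M"
abbreviation "all_chunks S \<equiv> L * nchunks M S"
abbreviation "iter \<equiv> iter_time L R tAT tE tD tC beta M"

definition a2a_fin :: "real \<Rightarrow> nat \<Rightarrow> real" where
  "a2a_fin S k = fst (hist L R tAT tE tD tC beta M S (Suc k) ! k)"

definition comp_fin :: "real \<Rightarrow> nat \<Rightarrow> real" where
  "comp_fin S k = fst (snd (hist L R tAT tE tD tC beta M S (Suc k) ! k))"

definition chunks_sent :: "real \<Rightarrow> nat \<Rightarrow> nat" where
  "chunks_sent S k = snd (snd (hist L R tAT tE tD tC beta M S (Suc k) ! k))"

definition comm_free :: "real \<Rightarrow> nat \<Rightarrow> real" where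
  "comm_free S j = (if j = 0 then 0 else a2a_fin S (j - 1))"

definition chunks_before :: "real \<Rightarrow> nat \<Rightarrow> nat" where
  "chunks_before S j = (if j = 0 then 0 else chunks_sent S (j - 1))"

definition comp_free :: "real \<Rightarrow> nat \<Rightarrow> real" where
  "comp_free S j = (if j = 0 then 0 else comp_fin S (j - 1))"

definition a2a_ready :: "real \<Rightarrow> nat \<Rightarrow> real" where
  "a2a_ready S j = (if j < R then 0 else comp_fin S (j - R))"

definition allreduce_rel :: "real \<Rightarrow> nat \<Rightarrow> real" where
  "allreduce_rel S b = comp_fin S (2 * R * (b + 1) - 1)"

definition chunk_rel :: "real \<Rightarrow> nat \<Rightarrow> real" where
  "chunk_rel S m = allreduce_rel S (m div nchunks M S)"

definition chunk_avail :: "real \<Rightarrow> nat \<Rightarrow> nat \<Rightarrow> bool" where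
  "chunk_avail S j m \<longleftrightarrow> 2 * R * (m div nchunks M S + 1) - 1 < j"

definition gap_fill :: "real \<Rightarrow> nat \<Rightarrow> real \<times> nat" where
  "gap_fill S j = fill (chunk_rel S) (chunk_avail S j) (chunk_time S) (all_chunks S)
     (comm_free S j) (chunks_before S j) (a2a_ready S j)"

definition allreduce_fin :: "real \<Rightarrow> real" where
  "allreduce_fin S =
     drain (chunk_rel S) (chunk_time S) (all_chunks S) (a2a_fin S (N - 1)) (chunks_sent S (N - 1))"

lemma nth_hist_eq:
  assumes "k < j"
  shows "hist L R tAT tE tD tC beta M S j ! k = (a2a_fin S k, comp_fin S k, chunks_sent S k)"
  unfolding a2a_fin_def comp_fin_def chunks_sent_def nth_hist[OF assms] by simp

lemma hist_Suc_nth: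
  "hist L R tAT tE tD tC beta M S (Suc j) ! j =
     (fst (gap_fill S j) + a2a_time j,
      max (comp_free S j) (fst (gap_fill S j) + a2a_time j) + comp_time j,
      snd (gap_fill S j))"
proof -
  let ?h = "hist L R tAT tE tD tC beta M S j"
  let ?t0 = "if j = 0 then 0 else fst (?h ! (j - 1))"
  let ?m0 = "if j = 0 then 0 else snd (snd (?h ! (j - 1)))"
  let ?cp = "if j = 0 then 0 else fst (snd (?h ! (j - 1)))"
  let ?r = "if j < R then 0 else fst (snd (?h ! (j - R)))"
  let ?rel = "\<lambda>m. fst (snd (?h ! (2 * R * (m div nchunks M S + 1) - 1)))"
  let ?avail = "\<lambda>m. 2 * R * (m div nchunks M S + 1) - 1 < j"
  have "hist L R tAT tE tD tC beta M S (Suc j) = ?h @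
      [let F = fill ?rel ?avail (chunk_time S) (all_chunks S) ?t0 ?m0 ?r
       in (fst F + a2a_time j, max ?cp (fst F + a2a_time j) + comp_time j, snd F)]"
    unfolding hist.simps(2) by (simp only: Let_def prod.case_eq_if)
  then have "hist L R tAT tE tD tC beta M S (Suc j) ! j =
      (let F = fill ?rel ?avail (chunk_time S) (all_chunks S) ?t0 ?m0 ?r
       in (fst F + a2a_time j, max ?cp (fst F + a2a_time j) + comp_time j, snd F))"
    by (simp only: nth_append length_hist less_irrefl if_False diff_self_eq_0 nth_Cons_0)
  moreover have "?t0 = comm_free S j" "?m0 = chunks_before S j" "?cp = comp_free S j"
    "?r = a2a_ready S j"
    using R_pos by (simp_all add: nth_hist_eq comm_free_def chunks_before_def comp_free_def
        a2a_ready_def)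
  moreover have "fill ?rel ?avail (chunk_time S) (all_chunks S)
      (comm_free S j) (chunks_before S j) (a2a_ready S j) = gap_fill S j"
    unfolding gap_fill_def chunk_avail_def[abs_def]
    by (rule fill_cong) (simp add: nth_hist_eq chunk_rel_def allreduce_rel_def)
  ultimately show ?thesis
    by (simp only: Let_def)
qed

lemma a2a_fin_eq: "a2a_fin S j = fst (gap_fill S j) + a2a_time j"
  unfolding a2a_fin_def hist_Suc_nth by simp

lemma chunks_sent_eq: "chunks_sent S j = snd (gap_fill S j)"
  unfolding chunks_sent_def hist_Suc_nth by simp

lemma comp_fin_eq: "comp_fin S j = max (comp_free S j) (a2a_fin S j) + comp_time j"
  unfolding comp_fin_def a2a_fin_eq hist_Suc_nth by simp

lemma N_pos: "0 < N"
  using L_pos R_pos by simp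

lemma block_index_lt: "b < L \<Longrightarrow> 2 * R * (b + 1) - 1 < N"
proof -
  assume "b < L"
  then have "2 * R * (b + 1) \<le> N" by (intro mult_le_mono2) simp
  moreover have "1 \<le> 2 * R * (b + 1)" using R_pos by simp
  ultimately show ?thesis by linarith
qed

lemma chunk_block_lt: "m < all_chunks S \<Longrightarrow> m div nchunks M S < L"
  by (metis less_mult_imp_div_less mult.commute)

lemma iter_time_eq: "iter S = max (comp_fin S (N - 1)) (allreduce_fin S)"
proof -
  let ?h = "hist L R tAT tE tD tC beta M S N"
  have last: "?h ! (N - 1) = (a2a_fin S (N - 1), comp_fin S (N - 1), chunks_sent S (N - 1))"
    using N_pos by (simp add: nth_hist_eq)
  have fin: "drain (\<lambda>m. fst (snd (?h ! (2 * R * (m div nchunks M S + 1) - 1)))) (chunk_time S)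
      (all_chunks S) (a2a_fin S (N - 1)) (chunks_sent S (N - 1)) = allreduce_fin S"
    unfolding allreduce_fin_def
  proof (rule drain_cong)
    fix m
    assume "m < all_chunks S"
    then have "2 * R * (m div nchunks M S + 1) - 1 < N"
      by (intro block_index_lt chunk_block_lt)
    then show "fst (snd (?h ! (2 * R * (m div nchunks M S + 1) - 1))) = chunk_rel S m"
      by (simp add: nth_hist_eq chunk_rel_def allreduce_rel_def)
  qed
  show ?thesis
    unfolding iter_time_def Let_def last fst_conv snd_conv fin ..
qed

section \<open>Comparing two chunk sizes\<close>

lemma a2a_time_pos: "0 < a2a_time j"
  unfolding a2a_dur_def using tC_pos tD_pos by simp

lemma comp_time_pos: "0 < comp_time j"
  unfolding comp_dur_def using tE_pos tAT_pos by simp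

lemma chunk_time_nonneg: "0 < S \<Longrightarrow> 0 \<le> chunk_time S m"
  using chunk_dur_nonneg[OF less_imp_le[OF beta_pos] M_pos] .

lemma chunk_time_le: "chunk_time S m \<le> beta * S"
  using chunk_dur_le[OF less_imp_le[OF beta_pos]] .

lemma a2a_fin_ge: "max (comm_free S j) (a2a_ready S j) + a2a_time j \<le> a2a_fin S j"
  using fill_start_ge[of "comm_free S j" "a2a_ready S j"] unfolding a2a_fin_eq gap_fill_def by simp

lemma a2a_fin_le_comp_fin: "a2a_fin S j + comp_time j \<le> comp_fin S j"
  unfolding comp_fin_eq by simp

lemma a2a_fin_nonneg: "0 \<le> a2a_fin S j"
proof (induction j)
  case 0
  show ?case
    using a2a_fin_ge[of S 0] a2a_time_pos[of 0] by (simp add: comm_free_def)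
next
  case (Suc j)
  show ?case
    using Suc a2a_fin_ge[of S "Suc j"] a2a_time_pos[of "Suc j"] by (simp add: comm_free_def)
qed

lemma comp_fin_nonneg: "0 \<le> comp_fin S j"
  using a2a_fin_nonneg[of S j] a2a_fin_le_comp_fin[of S j] comp_time_pos[of j] by linarith

lemma comp_fin_mono: "i \<le> k \<Longrightarrow> comp_fin S i \<le> comp_fin S k"
proof (induction k)
  case (Suc k)
  have "comp_fin S k \<le> comp_fin S (Suc k)"
    using comp_fin_eq[of S "Suc k"] comp_time_pos[of "Suc k"] by (simp add: comp_free_def)
  with Suc show ?case by (cases "i = Suc k") auto
qed simp

lemma a2a_ready_le_comp_fin: "j \<le> k \<Longrightarrow> a2a_ready S j \<le> comp_fin S k"
  unfolding a2a_ready_def using comp_fin_nonneg comp_fin_mono by simp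

lemma a2a_ready_nonneg: "0 \<le> a2a_ready S j"
  unfolding a2a_ready_def using comp_fin_nonneg by simp

lemma a2a_ready_mono: "i \<le> k \<Longrightarrow> a2a_ready S i \<le> a2a_ready S k"
  unfolding a2a_ready_def using comp_fin_mono comp_fin_nonneg by auto

lemma allreduce_rel_mono: "b \<le> b' \<Longrightarrow> allreduce_rel S b \<le> allreduce_rel S b'"
  unfolding allreduce_rel_def by (intro comp_fin_mono diff_le_mono) simp

lemma allreduce_rel_le_last:
  assumes "b < L"
  shows "allreduce_rel S b \<le> comp_fin S (N - 1)"
proof -
  have "2 * R * (b + 1) - 1 \<le> N - 1" using block_index_lt[OF assms] by linarith
  then show ?thesis unfolding allreduce_rel_def by (rule comp_fin_mono)
qed

lemma fin_le_shift:
  assumes "0 < S"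
  shows "a2a_fin S k \<le> a2a_fin S' k + real (Suc k) * beta * S
    \<and> comp_fin S k \<le> comp_fin S' k + real (Suc k) * beta * S"
proof (induction k rule: less_induct)
  case (less k)
  have bS: "0 \<le> beta * S" using beta_pos assms by simp
  have shift_mono: "real i * beta * S \<le> real k * beta * S" if "i \<le> k" for i
    using that bS by (simp add: mult.assoc mult_right_mono)
  have shift_Suc: "real (Suc k) * beta * S = real k * beta * S + beta * S"
    by (simp add: algebra_simps)
  have free: "comm_free S k \<le> comm_free S' k + real k * beta * S"
    using less[of "k - 1"] by (cases k) (simp_all add: comm_free_def)
  have ready: "a2a_ready S k \<le> a2a_ready S' k + real k * beta * S"
  proof (cases "k < R")
    case True
    then show ?thesis using shift_mono[of 0] by (simp add: a2a_ready_def)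
  next
    case False
    then have "comp_fin S (k - R) \<le> comp_fin S' (k - R) + real (Suc (k - R)) * beta * S"
      using less[of "k - R"] R_pos by simp
    moreover have "real (Suc (k - R)) * beta * S \<le> real k * beta * S"
      using False R_pos by (intro shift_mono) simp
    ultimately show ?thesis using False by (simp add: a2a_ready_def)
  qed
  have "fst (gap_fill S k) \<le> max (comm_free S k) (a2a_ready S k + beta * S)"
    unfolding gap_fill_def by (rule fill_start_le[OF chunk_time_le bS])
  also have "\<dots> \<le> max (comm_free S' k) (a2a_ready S' k) + real (Suc k) * beta * S"
    using free ready shift_Suc bS by (intro max.boundedI) (simp_all add: le_max_iff_disj)
  also have "\<dots> \<le> fst (gap_fill S' k) + real (Suc k) * beta * S"
    unfolding gap_fill_def using fill_start_ge by simp
  finally have a2a: "a2a_fin S k \<le> a2a_fin S' k + real (Suc k) * beta * S"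
    unfolding a2a_fin_eq by simp
  have "comp_free S k \<le> comp_free S' k + real (Suc k) * beta * S"
    using less[of "k - 1"] shift_mono[of 0] shift_Suc bS by (cases k) (simp_all add: comp_free_def)
  then have "max (comp_free S k) (a2a_fin S k) \<le> max (comp_free S' k) (a2a_fin S' k) + real (Suc k) * beta * S"
    using a2a max.cobounded1[of "comp_free S' k" "a2a_fin S' k"] max.cobounded2[of "comp_free S' k" "a2a_fin S' k"]
    by (intro max.boundedI) linarith+
  then have "comp_fin S k \<le> comp_fin S' k + real (Suc k) * beta * S"
    unfolding comp_fin_eq[of S] comp_fin_eq[of S'] by linarith
  with a2a show ?case ..
qed

lemma comp_fin_shift:
  assumes "0 < S" and "k < N"
  shows "comp_fin S k \<le> comp_fin S' k + real N * beta * S"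
proof -
  have "real (Suc k) \<le> real N" using assms(2) by (subst of_nat_le_iff) simp
  then have "real (Suc k) * (beta * S) \<le> real N * (beta * S)"
    using assms(1) beta_pos by (intro mult_right_mono) simp_all
  then show ?thesis using fin_le_shift[OF assms(1), of k S'] by (simp add: mult.assoc)
qed

lemma a2a_ready_shift: "0 < S \<Longrightarrow> j < N \<Longrightarrow> a2a_ready S j \<le> a2a_ready S' j + real N * beta * S"
  unfolding a2a_ready_def using comp_fin_shift[of S "j - R" S'] beta_pos by simp

lemma allreduce_rel_shift:
  "0 < S \<Longrightarrow> b < L \<Longrightarrow> allreduce_rel S b \<le> allreduce_rel S' b + real N * beta * S"
  unfolding allreduce_rel_def using comp_fin_shift block_index_lt by blast

lemma late_work_le_allreduce_fin:
  assumes "0 < S"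
  shows "T + late_work (a2a_ready S) a2a_time T 0 N + late_work (chunk_rel S) (chunk_time S) T 0 (all_chunks S)
    \<le> max (allreduce_fin S) T"
proof -
  let ?P = "\<lambda>j. max (comm_free S j) T + late_work (a2a_ready S) a2a_time T j N
      + late_work (chunk_rel S) (chunk_time S) T (chunks_before S j) (all_chunks S) \<le> max (allreduce_fin S) T"
  have base: "?P N"
    using drain_late_work[OF chunk_time_nonneg[OF assms], of "a2a_fin S (N - 1)" T "chunk_rel S"]
      N_pos by (simp add: allreduce_fin_def comm_free_def chunks_before_def late_work_empty)
  have step: "?P j" if "0 \<le> j" "j < N" "?P (Suc j)" for j
  proof -
    have "max (comm_free S j) T + (if T \<le> a2a_ready S j then a2a_time j else 0)
        + late_work (chunk_rel S) (chunk_time S) T (chunks_before S j) (all_chunks S)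
      \<le> max (a2a_fin S j) T + late_work (chunk_rel S) (chunk_time S) T (chunks_sent S j) (all_chunks S)"
      using fill_late_work[OF chunk_time_nonneg[OF assms] less_imp_le[OF a2a_time_pos]]
      unfolding a2a_fin_eq chunks_sent_eq gap_fill_def .
    moreover have "late_work (a2a_ready S) a2a_time T j N
        = (if T \<le> a2a_ready S j then a2a_time j else 0) + late_work (a2a_ready S) a2a_time T (Suc j) N"
      using that(2) by (rule late_work_Suc)
    ultimately show ?thesis
      using that(3) by (simp add: comm_free_def chunks_before_def)
  qed
  have "?P 0"
    using inc_induct[of 0 N ?P, OF le0 base step] .
  then show ?thesis
    by (simp add: comm_free_def chunks_before_def)
qed

lemma work_released_after_le_iter:
  assumes S: "0 < S" "0 < S'"
    and ready: "\<And>k. j \<le> k \<Longrightarrow> k < N \<Longrightarrow> T \<le> a2a_ready S' k"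
    and released: "\<And>b. m div nchunks M S \<le> b \<Longrightarrow> b < L \<Longrightarrow> T \<le> allreduce_rel S' b"
    and last: "T \<le> comp_fin S' (N - 1)"
  shows "T + (\<Sum>k\<in>{j..<N}. a2a_time k) + (\<Sum>i\<in>{m..<all_chunks S}. chunk_time S i) \<le> iter S'"
proof -
  have "(\<Sum>k\<in>{j..<N}. a2a_time k) = late_work (a2a_ready S') a2a_time T j N"
    unfolding late_work_def using ready by (intro sum.cong) auto
  also have "\<dots> \<le> late_work (a2a_ready S') a2a_time T 0 N"
    unfolding late_work_def by (rule sum_mono2) (auto simp: less_imp_le[OF a2a_time_pos])
  finally have a2a: "(\<Sum>k\<in>{j..<N}. a2a_time k) \<le> late_work (a2a_ready S') a2a_time T 0 N" .
  let ?n = "nchunks M S" and ?n' = "nchunks M S'"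
  have "(\<Sum>i\<in>{m..<all_chunks S}. chunk_time S i)
      = (\<Sum>i\<in>{m..<all_chunks S}. if m div ?n \<le> i div ?n then chunk_time S i else 0)"
    by (intro sum.cong) (auto simp: div_le_mono)
  also have "\<dots> \<le> (\<Sum>i<all_chunks S. if m div ?n \<le> i div ?n then chunk_time S i else 0)"
    by (rule sum_mono2) (auto simp: chunk_time_nonneg[OF S(1)])
  also have "\<dots> = (\<Sum>b<L. if m div ?n \<le> b then beta * M else 0)"
    by (rule sum_chunk_dur_blocks[OF M_pos S(1)])
  also have "\<dots> \<le> (\<Sum>b<L. if T \<le> allreduce_rel S' b then beta * M else 0)"
    using released beta_pos M_pos by (intro sum_mono) auto
  also have "\<dots> = (\<Sum>i<all_chunks S'. if T \<le> allreduce_rel S' (i div ?n') then chunk_time S' i else 0)"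
    by (rule sum_chunk_dur_blocks[OF M_pos S(2), symmetric])
  also have "\<dots> = late_work (chunk_rel S') (chunk_time S') T 0 (all_chunks S')"
    unfolding late_work_def chunk_rel_def atLeast0LessThan ..
  finally have chunks: "(\<Sum>i\<in>{m..<all_chunks S}. chunk_time S i)
      \<le> late_work (chunk_rel S') (chunk_time S') T 0 (all_chunks S')" .
  have "max (allreduce_fin S') T \<le> iter S'"
    using last by (simp add: iter_time_eq)
  then show ?thesis
    using late_work_le_allreduce_fin[OF S(2), of T] a2a chunks by linarith
qed

lemma restart_at_chunk_le:
  assumes S: "0 < S" "0 < S'" and m: "m < all_chunks S"
    and before_ready: "\<And>k. j \<le> k \<Longrightarrow> k < N \<Longrightarrow> chunk_rel S m \<le> a2a_ready S' k + real N * beta * S"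
  shows "chunk_rel S m + (\<Sum>k\<in>{j..<N}. a2a_time k) + (\<Sum>i\<in>{m..<all_chunks S}. chunk_time S i)
    \<le> iter S' + real N * beta * S"
proof -
  have b: "m div nchunks M S < L" using chunk_block_lt[OF m] .
  have rel: "chunk_rel S m \<le> allreduce_rel S' (m div nchunks M S) + real N * beta * S"
    unfolding chunk_rel_def using allreduce_rel_shift[OF S(1) b] .
  have "chunk_rel S m - real N * beta * S + (\<Sum>k\<in>{j..<N}. a2a_time k)
      + (\<Sum>i\<in>{m..<all_chunks S}. chunk_time S i) \<le> iter S'"
  proof (rule work_released_after_le_iter[OF S])
    show "chunk_rel S m - real N * beta * S \<le> a2a_ready S' k" if "j \<le> k" "k < N" for k
      using before_ready[OF that] by simp
    show "chunk_rel S m - real N * beta * S \<le> allreduce_rel S' b'"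
      if "m div nchunks M S \<le> b'" "b' < L" for b'
      using rel allreduce_rel_mono[OF that(1), of S'] by linarith
    show "chunk_rel S m - real N * beta * S \<le> comp_fin S' (N - 1)"
      using rel allreduce_rel_le_last[OF b, of S'] by linarith
  qed
  then show ?thesis by linarith
qed

lemma restart_at_ready_le:
  assumes S: "0 < S" "0 < S'" and j: "j < N"
    and idle: "all_chunks S \<le> m \<or> \<not> chunk_avail S j m \<or> a2a_ready S j \<le> chunk_rel S m"
  shows "a2a_ready S j + (\<Sum>k\<in>{j..<N}. a2a_time k) + (\<Sum>i\<in>{m..<all_chunks S}. chunk_time S i)
    \<le> iter S' + real N * beta * S"
proof -
  have ready: "a2a_ready S j \<le> a2a_ready S' j + real N * beta * S"
    using a2a_ready_shift[OF S(1) j] .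
  have "a2a_ready S j - real N * beta * S + (\<Sum>k\<in>{j..<N}. a2a_time k)
      + (\<Sum>i\<in>{m..<all_chunks S}. chunk_time S i) \<le> iter S'"
  proof (rule work_released_after_le_iter[OF S])
    show "a2a_ready S j - real N * beta * S \<le> a2a_ready S' k" if "j \<le> k" "k < N" for k
      using ready a2a_ready_mono[OF that(1), of S'] by linarith
    show "a2a_ready S j - real N * beta * S \<le> allreduce_rel S' b"
      if b: "m div nchunks M S \<le> b" "b < L" for b
    proof -
      have "m div nchunks M S < L" using b by linarith
      then have "m < all_chunks S"
        using div_less_iff_less_mult[OF nchunks_pos[OF M_pos S(1)]] by (simp add: mult.commute)
      with idle consider "\<not> chunk_avail S j m" | "a2a_ready S j \<le> chunk_rel S m" by linarith
      then show ?thesis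
      proof cases
        case 1
        have "2 * R * (m div nchunks M S + 1) - 1 \<le> 2 * R * (b + 1) - 1"
          using b(1) by (intro diff_le_mono mult_le_mono2) simp
        with 1 have "j \<le> 2 * R * (b + 1) - 1"
          unfolding chunk_avail_def by linarith
        then have "a2a_ready S' j \<le> allreduce_rel S' b"
          unfolding allreduce_rel_def by (rule a2a_ready_le_comp_fin)
        with ready show ?thesis by linarith
      next
        case 2
        then show ?thesis
          using allreduce_rel_shift[OF S(1), of "m div nchunks M S" S'] b
            allreduce_rel_mono[OF b(1), of S'] unfolding chunk_rel_def by linarith
      qed
    qed
    show "a2a_ready S j - real N * beta * S \<le> comp_fin S' (N - 1)"
      using ready a2a_ready_le_comp_fin[of j "N - 1" S'] j by linarith
  qed
  then show ?thesis by linarith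
qed

lemma gap_fill_remaining_work_le:
  assumes S: "0 < S" "0 < S'" and j: "j < N"
    and before: "comm_free S j + (\<Sum>k\<in>{j..<N}. a2a_time k)
      + (\<Sum>i\<in>{chunks_before S j..<all_chunks S}. chunk_time S i) \<le> iter S' + real N * beta * S"
  shows "fst (gap_fill S j) + (\<Sum>k\<in>{j..<N}. a2a_time k)
      + (\<Sum>i\<in>{snd (gap_fill S j)..<all_chunks S}. chunk_time S i) \<le> iter S' + real N * beta * S"
proof (rule fill_remaining_work_le[where rel = "chunk_rel S" and avail = "chunk_avail S j"
      and t = "comm_free S j" and m = "chunks_before S j" and r = "a2a_ready S j"])
  show "fill (chunk_rel S) (chunk_avail S j) (chunk_time S) (all_chunks S) (comm_free S j)
      (chunks_before S j) (a2a_ready S j) = (fst (gap_fill S j), snd (gap_fill S j))"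
    by (simp add: gap_fill_def)
  show "chunk_rel S m + (\<Sum>k\<in>{j..<N}. a2a_time k) + (\<Sum>i\<in>{m..<all_chunks S}. chunk_time S i)
      \<le> iter S' + real N * beta * S"
    if "chunks_before S j \<le> m" "m < all_chunks S" "chunk_avail S j m" "chunk_rel S m < a2a_ready S j"
    for m
  proof (rule restart_at_chunk_le[OF S that(2)])
    show "chunk_rel S m \<le> a2a_ready S' k + real N * beta * S" if "j \<le> k" "k < N" for k
      using \<open>chunk_rel S m < a2a_ready S j\<close> a2a_ready_shift[OF S(1) j, of S']
        a2a_ready_mono[OF that(1), of S'] by linarith
  qed
  show "a2a_ready S j + (\<Sum>k\<in>{j..<N}. a2a_time k) + (\<Sum>i\<in>{m..<all_chunks S}. chunk_time S i)
      \<le> iter S' + real N * beta * S"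
    if "chunks_before S j \<le> m"
      "all_chunks S \<le> m \<or> \<not> chunk_avail S j m \<or> a2a_ready S j \<le> chunk_rel S m" for m
    using restart_at_ready_le[OF S j that(2)] .
qed (use before in simp)

lemma remaining_comm_work_le:
  assumes S: "0 < S" "0 < S'"
  shows "j \<le> N \<Longrightarrow> comm_free S j + (\<Sum>k\<in>{j..<N}. a2a_time k)
      + (\<Sum>i\<in>{chunks_before S j..<all_chunks S}. chunk_time S i) \<le> iter S' + real N * beta * S"
proof (induction j)
  case 0
  have "0 + (\<Sum>k\<in>{0..<N}. a2a_time k) + (\<Sum>i\<in>{0..<all_chunks S}. chunk_time S i) \<le> iter S'"
    by (rule work_released_after_le_iter[OF S])
      (auto simp: a2a_ready_nonneg comp_fin_nonneg allreduce_rel_def)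
  moreover have "iter S' \<le> iter S' + real N * beta * S" using beta_pos S by simp
  ultimately have "0 + (\<Sum>k\<in>{0..<N}. a2a_time k) + (\<Sum>i\<in>{0..<all_chunks S}. chunk_time S i)
      \<le> iter S' + real N * beta * S" by linarith
  then show ?case by (simp add: comm_free_def chunks_before_def)
next
  case (Suc j)
  then have j: "j < N" by simp
  have "(\<Sum>k\<in>{j..<N}. a2a_time k) = a2a_time j + (\<Sum>k\<in>{Suc j..<N}. a2a_time k)"
    using j by (rule sum.atLeast_Suc_lessThan)
  then show ?case
    using gap_fill_remaining_work_le[OF S j Suc.IH[OF less_imp_le[OF j]]]
    by (simp add: comm_free_def chunks_before_def a2a_fin_eq chunks_sent_eq)
qed

lemma iter_time_le_shift:
  assumes S: "0 < S" "0 < S'"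
  shows "iter S \<le> iter S' + real N * beta * S"
proof -
  have "comp_fin S (N - 1) \<le> iter S' + real N * beta * S"
    using comp_fin_shift[OF S(1), of "N - 1" S'] N_pos by (simp add: iter_time_eq)
  moreover have "allreduce_fin S \<le> iter S' + real N * beta * S"
    unfolding allreduce_fin_def
  proof (rule drain_le)
    show "a2a_fin S (N - 1) + (\<Sum>i\<in>{chunks_sent S (N - 1)..<all_chunks S}. chunk_time S i)
        \<le> iter S' + real N * beta * S"
      using remaining_comm_work_le[OF S order_refl] N_pos by (simp add: comm_free_def chunks_before_def)
    show "chunk_rel S m + (\<Sum>i\<in>{m..<all_chunks S}. chunk_time S i) \<le> iter S' + real N * beta * S"
      if "m < all_chunks S" for m
      using restart_at_chunk_le[OF S that, of N] by simp
  qed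
  ultimately show ?thesis by (simp add: iter_time_eq)
qed

end

section \<open>The limit\<close>

lemma tendsto_at_right_0_INF:
  fixes f :: "real \<Rightarrow> real"
  assumes "\<And>S S'. 0 < S \<Longrightarrow> 0 < S' \<Longrightarrow> f S \<le> f S' + c * S"
  shows "(f \<longlongrightarrow> (INF S\<in>{0<..}. f S)) (at_right 0)"
    and "0 < S \<Longrightarrow> (INF S\<in>{0<..}. f S) \<le> f S"
proof -
  let ?I = "INF S\<in>{0<..}. f S"
  have bdd: "bdd_below (f ` {0<..})"
    using assms[of 1] by (intro bdd_belowI2[of _ "f 1 - c"]) force
  show ge: "?I \<le> f S" if "0 < S" for S
    using that bdd by (intro cINF_lower) auto
  have le: "f S \<le> ?I + c * S" if "0 < S" for S
  proof -
    have "f S - c * S \<le> ?I"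
      using assms[OF that] by (intro cINF_greatest) force+
    then show ?thesis by simp
  qed
  have pos: "eventually (\<lambda>S. 0 < S) (at_right (0::real))"
    by (rule eventually_at_right_less)
  have "((\<lambda>S. ?I + c * S) \<longlongrightarrow> ?I + c * 0) (at_right 0)"
    by (intro tendsto_intros)
  then show "(f \<longlongrightarrow> ?I) (at_right 0)"
    by (intro tendsto_sandwich[OF eventually_mono[OF pos ge] eventually_mono[OF pos le]]) simp_all
qed

theorem theorem2:
  fixes L R :: nat and tAT tE tD tC beta M :: real
  assumes "L \<ge> 1" and "R \<ge> 1"
    and "tAT > 0" and "tE > 0" and "tD > 0" and "tC > 0"
    and "beta > 0" and "M > 0"
  shows "\<exists>T0. ((\<lambda>S. iter_time L R tAT tE tD tC beta M S) \<longlongrightarrow> T0) (at_right 0)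
            \<and> (\<forall>S > 0. T0 \<le> iter_time L R tAT tE tD tC beta M S)"
proof -
  interpret backprop_schedule L R tAT tE tD tC beta M
    using assms by unfold_locales
  have "iter S \<le> iter S' + (real N * beta) * S" if "0 < S" "0 < S'" for S S'
    using iter_time_le_shift[OF that] by (simp add: mult.assoc)
  from tendsto_at_right_0_INF[of iter, OF this] show ?thesis
    by blast
qed

end
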